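(* Assume $\|\hat F'(y)-\hat F'(x)\|_F\le L_{\hat F}\|y-x\|$ for all $x,y\in\mathcal F$ and that $\sigma_{\min}(\hat F'(x)^* )\ge\sqrt\mu$ for all $x\in\mathcal F$, some $\mu>0$. Let $\{x_k\}$ be computed by Scheme 1 in which $x_{k+1}$ is given by $$x_{k+1}=x_k-\eta_k\big(\hat F'(x_k)^*\hat F'(x_k)+\tau_kL_kI_n\big)^{-1}\hat F'(x_k)^*\hat F(x_k),$$ with $\tau_k>0$ and $\eta_k\in(0,2)$. Then for $k\in\mathbb Z_+$: $$\hat f_1(x_{k+1})\le\frac{\tau_k}{2}+\begin{cases}\frac{\hat f_2(x_k)}{2\tau_k}\Big(1-\frac{\eta_k(2-\eta_k)\mu}{L_k\tau_k+\mu}\Big),&\tau_k\ge\frac{\mu}{L_k},\\ \frac{\hat f_2(x_k)(1-\eta_k)^2}{2\tau_k}+\frac{\eta_k(2-\eta_k)L_k\hat f_2(x_k)}{2\mu}-\frac{\eta_k(2-\eta_k)L_k^2\hat f_2(x_k)\tau_k}{2\mu^2(1+\xi)^3}&\text{for some }\xi\in(-1,1],\ \text{if }\tau_k<\frac{\mu}{L_k}.\end{cases}$$ Moreover, if $\eta_k=1$ for all $k$, then $\hat f_1(x_{k+1})\le\frac{\tau_k}{2}+\frac{L_{\hat F}}{\mu}\hat f_2(x_k)$.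
   Context: Let $F:\mathbb R^n\to\mathbb R^m$ be smooth, $\hat F=\frac1{\sqrt m}F$ with Jacobian $\hat F'(x)$ and its transpose $\hat F'(x)^*$; Euclidean norms, $\|\cdot\|_F$ Frobenius norm. $\hat f_1(x)=\|\hat F(x)\|$, $\hat f_2=\hat f_1^2$, $\psi_{x,L,\tau}(y)=\frac\tau2+\frac{\|\hat F(x)+\hat F'(x)(y-x)\|^2}{2\tau}+\frac L2\|y-x\|^2$. $\mathcal F$ closed convex with nonempty interior, $\mathcal L(\hat f_1(x_0))\subseteq\mathcal F$ and the generated sequence stays in $\mathcal F$. Scheme 1 (as used here, with $x_{k+1}$ given by the displayed formula): input $x_0$, $L\in(0,L_{\hat F}]$, $L_0=L$; at iteration $k$ choose $\tau_k$, compute $x_{k+1}$; if $\hat f_1(x_{k+1})>\psi_{x_k,L_k,\tau_k}(x_{k+1})$, set $L_k:=\min\{2L_k,2L_{\hat F}\}$ and recompute; otherwise $L_{k+1}=\max\{L_k/2,L\}$. *)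

theory Defs
  imports "HOL-Analysis.Analysis"
begin

definition Fhat :: "(real^'n \<Rightarrow> real^'m) \<Rightarrow> real^'n \<Rightarrow> real^'m" where
  "Fhat F x = (1 / sqrt (real CARD('m))) *\<^sub>R F x"

definition f1hat :: "(real^'n \<Rightarrow> real^'m) \<Rightarrow> real^'n \<Rightarrow> real" where
  "f1hat F x = norm (Fhat F x)"

definition f2hat :: "(real^'n \<Rightarrow> real^'m) \<Rightarrow> real^'n \<Rightarrow> real" where
  "f2hat F x = (f1hat F x)\<^sup>2"

definition frob_norm :: "real^'n^'m \<Rightarrow> real" where
  "frob_norm A = sqrt (\<Sum>i\<in>UNIV. \<Sum>j\<in>UNIV. (A $ i $ j)\<^sup>2)"

definition sigma_min :: "real^'q^'p \<Rightarrow> real" where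
  "sigma_min A = Inf {norm (A *v v) | v. norm v = 1}"

text \<open>The model  psi_{x,L,tau}(y); J x is the Jacobian of Fhat at x.\<close>
definition psi :: "(real^'n \<Rightarrow> real^'m) \<Rightarrow> (real^'n \<Rightarrow> real^'n^'m)
    \<Rightarrow> real^'n \<Rightarrow> real \<Rightarrow> real \<Rightarrow> real^'n \<Rightarrow> real" where
  "psi F J x L tau y = tau / 2 + (norm (Fhat F x + J x *v (y - x)))\<^sup>2 / (2 * tau)
      + L / 2 * (norm (y - x))\<^sup>2"

definition lm_step :: "(real^'n \<Rightarrow> real^'m) \<Rightarrow> (real^'n \<Rightarrow> real^'n^'m)
    \<Rightarrow> real^'n \<Rightarrow> real \<Rightarrow> real \<Rightarrow> real \<Rightarrow> real^'n" where
  "lm_step F J x tau eta L =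
     x - eta *\<^sub>R (matrix_inv (transpose (J x) ** J x + (tau * L) *\<^sub>R mat 1)
                   *v (transpose (J x) *v Fhat F x))"

definition scheme1_init :: "real \<Rightarrow> (nat \<Rightarrow> real) \<Rightarrow> nat \<Rightarrow> real" where
  "scheme1_init L Lk k = (if k = 0 then L else max (Lk (k - 1) / 2) L)"

definition scheme1_trial :: "real \<Rightarrow> real \<Rightarrow> nat \<Rightarrow> real" where
  "scheme1_trial LF L0 j = (if j = 0 then L0 else min (2 ^ j * L0) (2 * LF))"

definition scheme1_accept :: "(real^'n \<Rightarrow> real^'m) \<Rightarrow> (real^'n \<Rightarrow> real^'n^'m)
    \<Rightarrow> real^'n \<Rightarrow> real \<Rightarrow> real \<Rightarrow> real \<Rightarrow> bool" where
  "scheme1_accept F J x tau eta Lv \<longleftrightarrow>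
     f1hat F (lm_step F J x tau eta Lv) \<le> psi F J x Lv tau (lm_step F J x tau eta Lv)"

definition scheme1 :: "(real^'n \<Rightarrow> real^'m) \<Rightarrow> (real^'n \<Rightarrow> real^'n^'m) \<Rightarrow> real \<Rightarrow> real
    \<Rightarrow> real^'n \<Rightarrow> (nat \<Rightarrow> real) \<Rightarrow> (nat \<Rightarrow> real) \<Rightarrow> (nat \<Rightarrow> real^'n) \<Rightarrow> (nat \<Rightarrow> real) \<Rightarrow> bool" where
  "scheme1 F J L LF x0 tau eta x Lk \<longleftrightarrow>
     x 0 = x0 \<and>
     (\<forall>k. \<exists>j. Lk k = scheme1_trial LF (scheme1_init L Lk k) j
             \<and> (\<forall>i<j. \<not> scheme1_accept F J (x k) (tau k) (eta k)
                          (scheme1_trial LF (scheme1_init L Lk k) i))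
             \<and> scheme1_accept F J (x k) (tau k) (eta k) (Lk k)
             \<and> x (Suc k) = lm_step F J (x k) (tau k) (eta k) (Lk k))"

end

theory Submission
  imports Defs
begin

(* Write c = tau L and let d be the regularised Gauss-Newton direction, the solution of
   (J^T J + c I) d = J^T F.  Then the model value at the trial point x - eta d is
     psi = tau/2 + (|F|^2 - eta (2 - eta) F.Jd) / (2 tau).
   The residual r = F - Jd satisfies J^T r = c d, so the singular value bound
   sigma_min(J^T) >= sqrt mu gives mu |r|^2 <= c^2 |d|^2, and with Cauchy-Schwarz on
   c |d|^2 = r.Jd also mu |d|^2 <= |Jd|^2.  Expanding |F|^2 = |r|^2 + 2c|d|^2 + |Jd|^2 yields
   mu |F|^2 <= (mu + c) F.Jd, which together with the acceptance test f1 <= psi is the first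
   bound.  The other two bounds are elementary estimates of the factor
   1 - eta (2 - eta) mu / (L_k tau + mu), using L_k <= 2 L_F from the doubling rule. *)

lemma inner_transpose_matrix_vector:
  "(transpose A *v x) \<bullet> y = x \<bullet> ((A::real^'n^'m) *v y)"
  by (simp add: dot_lmul_matrix)

lemma inner_matrix_vector_transpose:
  "x \<bullet> (transpose A *v y) = ((A::real^'n^'m) *v x) \<bullet> y"
  by (metis inner_transpose_matrix_vector inner_commute)

(* Keep transpose A *v x unexpanded, so that simp works with the adjoint identities above. *)
declare transpose_matrix_vector[simp del]

lemma matrix_inv_right:
  fixes A :: "'a::field^'n^'n"
  assumes "invertible A"
  shows "A ** matrix_inv A = mat 1"
  unfolding matrix_inv_def by (rule someI2_ex) (use assms in \<open>auto simp: invertible_def\<close>)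

lemma regularized_gram_matrix_vector:
  fixes J :: "real^'n^'m"
  shows "(transpose J ** J + c *\<^sub>R mat 1) *v v = transpose J *v (J *v v) + c *\<^sub>R v"
  by (simp add: matrix_vector_mult_add_rdistrib matrix_vector_mul_assoc
      flip: scaleR_matrix_vector_assoc)

lemma invertible_regularized_gram:
  fixes J :: "real^'n^'m"
  assumes "0 < c"
  shows "invertible (transpose J ** J + c *\<^sub>R mat 1)"
proof -
  have "v = 0" if "(transpose J ** J + c *\<^sub>R mat 1) *v v = 0" for v
  proof -
    have "(norm (J *v v))\<^sup>2 + c * (norm v)\<^sup>2 = v \<bullet> ((transpose J ** J + c *\<^sub>R mat 1) *v v)"
      by (simp add: regularized_gram_matrix_vector inner_add_right
          inner_matrix_vector_transpose power2_norm_eq_inner)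
    with that have "c * (norm v)\<^sup>2 \<le> 0"
      by (metis inner_zero_right le_add_same_cancel2 zero_le_power2)
    with assms show "v = 0" by (simp add: mult_le_0_iff)
  qed
  then have "inj ((*v) (transpose J ** J + c *\<^sub>R mat 1))"
    using vec.inj_iff_eq_0 by blast
  then show ?thesis
    using matrix_left_invertible_injective invertible_left_inverse by blast
qed

lemma regularized_normal_equation:
  fixes J :: "real^'n^'m" and F :: "real^'m"
  assumes "0 < c"
  defines "d \<equiv> matrix_inv (transpose J ** J + c *\<^sub>R mat 1) *v (transpose J *v F)"
  shows "transpose J *v (F - J *v d) = c *\<^sub>R d"
proof -
  have "(transpose J ** J + c *\<^sub>R mat 1) *v d = transpose J *v F"
    using matrix_inv_right[OF invertible_regularized_gram[OF assms(1), where J=J]]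
    by (simp add: d_def matrix_vector_mul_assoc matrix_mul_assoc matrix_mul_lid)
  then have "transpose J *v (J *v d) + c *\<^sub>R d = transpose J *v F"
    by (simp only: regularized_gram_matrix_vector)
  then show ?thesis
    by (simp add: matrix_vector_mult_diff_distrib algebra_simps)
qed

lemma regularized_residual_inner:
  fixes J :: "real^'n^'m"
  assumes "transpose J *v (F - J *v d) = c *\<^sub>R d"
  shows "(F - J *v d) \<bullet> (J *v d) = c * (norm d)\<^sup>2"
  by (metis assms inner_commute inner_scaleR_left inner_transpose_matrix_vector power2_norm_eq_inner)

lemma regularized_solution_inner:
  fixes J :: "real^'n^'m"
  assumes "transpose J *v (F - J *v d) = c *\<^sub>R d"
  shows "F \<bullet> (J *v d) = (norm (J *v d))\<^sup>2 + c * (norm d)\<^sup>2"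
  using regularized_residual_inner[OF assms] by (simp add: inner_diff_left power2_norm_eq_inner)

lemma regularized_solution_lower_bound:
  fixes J :: "real^'n^'m"
  assumes normal: "transpose J *v (F - J *v d) = c *\<^sub>R d" and "0 < c" "0 \<le> s"
    and sigma: "\<And>v. s * norm v \<le> norm (transpose J *v v)"
  shows "s * norm d \<le> norm (J *v d)"
proof (cases "d = 0")
  case False
  define r where "r = F - J *v d"
  have "c * (norm d)\<^sup>2 = r \<bullet> (J *v d)"
    using regularized_residual_inner[OF normal] by (simp add: r_def)
  also have "\<dots> \<le> norm r * norm (J *v d)" by (rule norm_cauchy_schwarz)
  finally have "s * (c * (norm d)\<^sup>2) \<le> s * norm r * norm (J *v d)"
    using \<open>0 \<le> s\<close> by (metis mult.assoc mult_left_mono)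
  also have "\<dots> \<le> c * norm d * norm (J *v d)"
    using sigma[of r] normal \<open>0 < c\<close> by (simp add: r_def mult_right_mono)
  finally have "(c * norm d) * (s * norm d) \<le> (c * norm d) * norm (J *v d)"
    by (simp add: power2_eq_square algebra_simps)
  then show ?thesis using False \<open>0 < c\<close> by simp
qed simp

lemma regularized_solution_correlation:
  fixes J :: "real^'n^'m"
  assumes normal: "transpose J *v (F - J *v d) = c *\<^sub>R d" and "0 < c" "0 \<le> s"
    and sigma: "\<And>v. s * norm v \<le> norm (transpose J *v v)"
  shows "s\<^sup>2 * (norm F)\<^sup>2 \<le> (s\<^sup>2 + c) * (F \<bullet> (J *v d))"
proof -
  define r where "r = F - J *v d"
  have norm_F: "(norm F)\<^sup>2 = (norm r)\<^sup>2 + 2 * c * (norm d)\<^sup>2 + (norm (J *v d))\<^sup>2"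
  proof -
    have "F = r + J *v d" by (simp add: r_def)
    then have "(norm F)\<^sup>2 = (norm r)\<^sup>2 + 2 * (F \<bullet> (J *v d)) - (norm (J *v d))\<^sup>2"
      by (simp add: power2_norm_eq_inner inner_add_left inner_add_right inner_commute)
    then show ?thesis using regularized_solution_inner[OF normal] by simp
  qed
  have residual: "s\<^sup>2 * (norm r)\<^sup>2 \<le> c\<^sup>2 * (norm d)\<^sup>2"
  proof -
    have "s * norm r \<le> c * norm d" using sigma[of r] normal \<open>0 < c\<close> by (simp add: r_def)
    then have "(s * norm r)\<^sup>2 \<le> (c * norm d)\<^sup>2" using \<open>0 \<le> s\<close> by (simp add: power_mono)
    then show ?thesis by (simp add: power_mult_distrib)
  qed
  have image: "s\<^sup>2 * (norm d)\<^sup>2 \<le> (norm (J *v d))\<^sup>2"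
    using power_mono[OF regularized_solution_lower_bound[OF assms], of 2] \<open>0 \<le> s\<close>
    by (simp add: power_mult_distrib)
  have "(s\<^sup>2 + c) * (F \<bullet> (J *v d)) - s\<^sup>2 * (norm F)\<^sup>2
      = c * ((norm (J *v d))\<^sup>2 - s\<^sup>2 * (norm d)\<^sup>2) + (c\<^sup>2 * (norm d)\<^sup>2 - s\<^sup>2 * (norm r)\<^sup>2)"
    unfolding norm_F regularized_solution_inner[OF normal] by (simp add: algebra_simps power2_eq_square)
  also have "\<dots> \<ge> 0" using image residual \<open>0 < c\<close> by simp
  finally show ?thesis by simp
qed

lemma regularized_step_value:
  fixes J :: "real^'n^'m"
  assumes "transpose J *v (F - J *v d) = c *\<^sub>R d"
  shows "(norm (F - t *\<^sub>R (J *v d)))\<^sup>2 + c * t\<^sup>2 * (norm d)\<^sup>2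
       = (norm F)\<^sup>2 - t * (2 - t) * (F \<bullet> (J *v d))"
proof -
  have "(norm (F - t *\<^sub>R (J *v d)))\<^sup>2
      = (norm F)\<^sup>2 - 2 * t * (F \<bullet> (J *v d)) + t\<^sup>2 * (norm (J *v d))\<^sup>2"
    unfolding power2_norm_eq_inner
    by (simp add: inner_diff_left inner_diff_right inner_commute algebra_simps power2_eq_square)
  then show ?thesis
    by (simp add: regularized_solution_inner[OF assms] algebra_simps power2_eq_square)
qed

lemma regularized_step_decrease:
  fixes J :: "real^'n^'m"
  assumes normal: "transpose J *v (F - J *v d) = c *\<^sub>R d" and "0 < c" "0 \<le> s"
    and sigma: "\<And>v. s * norm v \<le> norm (transpose J *v v)"
    and "0 \<le> t" "t \<le> 2"
  shows "(norm (F - t *\<^sub>R (J *v d)))\<^sup>2 + c * t\<^sup>2 * (norm d)\<^sup>2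
       \<le> (1 - t * (2 - t) * s\<^sup>2 / (s\<^sup>2 + c)) * (norm F)\<^sup>2"
proof -
  have pos: "0 < s\<^sup>2 + c" using \<open>0 < c\<close> by (simp add: add_nonneg_pos)
  have "s\<^sup>2 * (norm F)\<^sup>2 / (s\<^sup>2 + c) \<le> F \<bullet> (J *v d)"
    using regularized_solution_correlation[OF assms(1-4)] pos by (simp add: divide_simps mult.commute)
  then have "t * (2 - t) * (s\<^sup>2 * (norm F)\<^sup>2 / (s\<^sup>2 + c)) \<le> t * (2 - t) * (F \<bullet> (J *v d))"
    using \<open>0 \<le> t\<close> \<open>t \<le> 2\<close> by (intro mult_left_mono) simp_all
  then have "(norm F)\<^sup>2 - t * (2 - t) * (F \<bullet> (J *v d))
      \<le> (1 - t * (2 - t) * s\<^sup>2 / (s\<^sup>2 + c)) * (norm F)\<^sup>2"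
    by (simp add: algebra_simps)
  then show ?thesis
    by (simp only: regularized_step_value[OF normal])
qed

lemma sigma_min_le_norm_matrix_vector:
  fixes A :: "real^'q^'p"
  shows "sigma_min A * norm v \<le> norm (A *v v)"
proof (cases "v = 0")
  case False
  define u where "u = (1 / norm v) *\<^sub>R v"
  have "norm (A *v u) \<in> {norm (A *v w) | w. norm w = 1}"
    using False by (auto simp: u_def)
  moreover have "bdd_below {norm (A *v w) | w. norm w = 1}" by (rule bdd_belowI[of _ 0]) auto
  ultimately have "sigma_min A \<le> norm (A *v u)" unfolding sigma_min_def by (rule cInf_lower)
  also have "norm (A *v u) = norm (A *v v) / norm v"
    by (simp add: u_def matrix_scaleR_vector_ac flip: scaleR_matrix_vector_assoc)
  finally show ?thesis using False by (simp add: field_simps)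
qed simp

lemma scheme1_iteration:
  assumes "scheme1 F J L LF x0 tau eta x Lk"
  shows "scheme1_accept F J (x k) (tau k) (eta k) (Lk k)
    \<and> x (Suc k) = lm_step F J (x k) (tau k) (eta k) (Lk k)"
  using assms unfolding scheme1_def by blast

lemma scheme1_trial_bounds:
  assumes "0 \<le> L" "L \<le> L0" "L0 \<le> LF"
  shows "L \<le> scheme1_trial LF L0 j \<and> scheme1_trial LF L0 j \<le> 2 * LF"
proof -
  have "L0 \<le> 2 ^ j * L0" using assms by (simp add: mult_le_cancel_right1)
  then show ?thesis using assms by (auto simp: scheme1_trial_def min_def)
qed

lemma scheme1_Lk_bounds:
  assumes scheme: "scheme1 F J L LF x0 tau eta x Lk" and "0 \<le> L" "L \<le> LF"
  shows "L \<le> Lk k \<and> Lk k \<le> 2 * LF"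
proof (induction k)
  case 0
  from scheme obtain j where "Lk 0 = scheme1_trial LF (scheme1_init L Lk 0) j"
    unfolding scheme1_def by blast
  then show ?case using scheme1_trial_bounds[of L L LF j] assms by (simp add: scheme1_init_def)
next
  case (Suc k)
  from scheme obtain j where "Lk (Suc k) = scheme1_trial LF (scheme1_init L Lk (Suc k)) j"
    unfolding scheme1_def by blast
  moreover have "L \<le> scheme1_init L Lk (Suc k)" "scheme1_init L Lk (Suc k) \<le> LF"
    using Suc assms by (auto simp: scheme1_init_def)
  ultimately show ?case using scheme1_trial_bounds assms by metis
qed

lemma inverse_add_le:
  fixes mu u :: real
  assumes "0 < mu" "0 \<le> u" "u \<le> mu"
  shows "1 / (mu + u) \<le> 1 / mu - u / (8 * mu\<^sup>2)"
proof -
  have "u * u \<le> 7 * mu * u" using assms by (simp add: mult_right_mono)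
  then have "8 * mu\<^sup>2 \<le> (8 * mu - u) * (mu + u)" by (simp add: power2_eq_square algebra_simps)
  then have "1 / (mu + u) \<le> (8 * mu - u) / (8 * mu\<^sup>2)" using assms by (simp add: divide_simps)
  also have "\<dots> = 1 / mu - u / (8 * mu\<^sup>2)" using assms by (simp add: field_simps power2_eq_square)
  finally show ?thesis .
qed

(* The theorem's bound for tau < mu / L_k with xi = 1, i.e. (1 + xi)^3 = 2^3. *)
lemma model_factor_small_tau:
  fixes f t l mu eta :: real
  assumes "0 \<le> f" "0 < t" "0 < l" "0 < mu" "l * t \<le> mu" "0 \<le> eta * (2 - eta)"
  shows "f / (2 * t) * (1 - eta * (2 - eta) * mu / (l * t + mu))
    \<le> f * (1 - eta)\<^sup>2 / (2 * t) + eta * (2 - eta) * l * f / (2 * mu)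
       - eta * (2 - eta) * l\<^sup>2 * f * t / (2 * mu\<^sup>2 * 2 ^ 3)"
proof -
  define P where "P = eta * (2 - eta)"
  have "0 < l * t" using assms by simp
  then have "0 < mu + l * t" using assms by linarith
  then have "1 - P * mu / (l * t + mu) = (1 - eta)\<^sup>2 + P * (l * t) / (mu + l * t)"
    by (simp add: P_def field_simps power2_eq_square)
  then have "f / (2 * t) * (1 - P * mu / (l * t + mu))
      = f * (1 - eta)\<^sup>2 / (2 * t) + P * f * l / 2 * (1 / (mu + l * t))"
    using assms by (simp add: distrib_left)
  also have "\<dots> \<le> f * (1 - eta)\<^sup>2 / (2 * t) + P * f * l / 2 * (1 / mu - l * t / (8 * mu\<^sup>2))"
    using inverse_add_le[of mu "l * t"] assms \<open>0 < l * t\<close>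
    by (intro add_left_mono mult_left_mono) (simp_all add: P_def)
  also have "\<dots> = f * (1 - eta)\<^sup>2 / (2 * t) + P * l * f / (2 * mu)
       - P * l\<^sup>2 * f * t / (2 * mu\<^sup>2 * 2 ^ 3)"
    using assms by (simp add: field_simps power2_eq_square)
  finally show ?thesis unfolding P_def .
qed

lemma model_factor_unit_eta:
  fixes f t l mu :: real
  assumes "0 \<le> f" "0 < t" "0 \<le> l" "0 < mu"
  shows "f / (2 * t) * (1 - mu / (l * t + mu)) \<le> l / (2 * mu) * f"
proof -
  have "0 < mu + l * t" using assms by (simp add: add_pos_nonneg)
  then have "1 - mu / (l * t + mu) = l * t / (l * t + mu)"
    by (simp add: field_simps)
  then have "f / (2 * t) * (1 - mu / (l * t + mu)) = l * f / (2 * (l * t + mu))"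
    using assms by simp
  also have "\<dots> \<le> l * f / (2 * mu)"
    using assms by (intro frac_le) simp_all
  finally show ?thesis by simp
qed

lemma f1hat_lm_step_le:
  fixes F :: "real^'n \<Rightarrow> real^'m" and J :: "real^'n \<Rightarrow> real^'n^'m"
  assumes accept: "scheme1_accept F J x tau eta Lv"
    and "0 < tau" "0 < Lv" "0 < mu" and sigma: "sqrt mu \<le> sigma_min (transpose (J x))"
    and "0 \<le> eta" "eta \<le> 2"
  shows "f1hat F (lm_step F J x tau eta Lv)
    \<le> tau / 2 + f2hat F x / (2 * tau) * (1 - eta * (2 - eta) * mu / (Lv * tau + mu))"
proof -
  define c where "c = tau * Lv"
  define d where
    "d = matrix_inv (transpose (J x) ** J x + c *\<^sub>R mat 1) *v (transpose (J x) *v Fhat F x)"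
  have "0 < c" using assms by (simp add: c_def)
  then have normal: "transpose (J x) *v (Fhat F x - J x *v d) = c *\<^sub>R d"
    unfolding d_def by (rule regularized_normal_equation)
  have sigma_bound: "sqrt mu * norm v \<le> norm (transpose (J x) *v v)" for v
    using mult_right_mono[OF sigma norm_ge_zero] sigma_min_le_norm_matrix_vector order_trans by blast
  have step: "lm_step F J x tau eta Lv - x = - (eta *\<^sub>R d)"
    by (simp add: lm_step_def d_def c_def)
  have "f1hat F (lm_step F J x tau eta Lv) \<le> psi F J x Lv tau (lm_step F J x tau eta Lv)"
    using accept by (simp add: scheme1_accept_def)
  also have "\<dots> = tau / 2
      + ((norm (Fhat F x - eta *\<^sub>R (J x *v d)))\<^sup>2 + c * eta\<^sup>2 * (norm d)\<^sup>2) / (2 * tau)"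
    unfolding psi_def step using \<open>0 < tau\<close>
    by (simp add: c_def linear_neg[OF matrix_vector_mul_linear] matrix_vector_mult_scaleR
        power_mult_distrib field_simps)
  also have "\<dots> \<le> tau / 2
      + (1 - eta * (2 - eta) * (sqrt mu)\<^sup>2 / ((sqrt mu)\<^sup>2 + c)) * (norm (Fhat F x))\<^sup>2 / (2 * tau)"
    using regularized_step_decrease[OF normal \<open>0 < c\<close> _ sigma_bound] assms
    by (simp add: divide_right_mono)
  also have "\<dots> = tau / 2 + f2hat F x / (2 * tau) * (1 - eta * (2 - eta) * mu / (Lv * tau + mu))"
    using \<open>0 < mu\<close> by (simp add: c_def f2hat_def f1hat_def mult.commute add.commute)
  finally show ?thesis .
qed

theorem theorem5:
  fixes F :: "real^'n \<Rightarrow> real^'m"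
    and J :: "real^'n \<Rightarrow> real^'n^'m"
    and FF :: "(real^'n) set"
    and L LF mu :: real
    and x0 :: "real^'n"
    and tau eta Lk :: "nat \<Rightarrow> real"
    and x :: "nat \<Rightarrow> real^'n"
  assumes jac: "\<And>y. (Fhat F has_derivative (\<lambda>h. J y *v h)) (at y)"
    and jac_cont: "continuous_on UNIV J"
    and FF_closed: "closed FF" and FF_convex: "convex FF" and FF_int: "interior FF \<noteq> {}"
    and level: "{y. f1hat F y \<le> f1hat F x0} \<subseteq> FF"
    and stay: "\<And>k. x k \<in> FF"
    and L_pos: "0 < L" and L_le: "L \<le> LF"
    and lip: "\<And>y z. y \<in> FF \<Longrightarrow> z \<in> FF \<Longrightarrow> frob_norm (J z - J y) \<le> LF * norm (z - y)"
    and mu_pos: "0 < mu"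
    and sigma: "\<And>y. y \<in> FF \<Longrightarrow> sigma_min (transpose (J y)) \<ge> sqrt mu"
    and tau_pos: "\<And>k. 0 < tau k"
    and eta_rng: "\<And>k. 0 < eta k \<and> eta k < 2"
    and scheme: "scheme1 F J L LF x0 tau eta x Lk"
  shows "(\<forall>k. (tau k \<ge> mu / Lk k \<longrightarrow>
              f1hat F (x (Suc k)) \<le> tau k / 2 + f2hat F (x k) / (2 * tau k)
                 * (1 - eta k * (2 - eta k) * mu / (Lk k * tau k + mu)))
            \<and> (tau k < mu / Lk k \<longrightarrow>
              (\<exists>\<xi>. -1 < \<xi> \<and> \<xi> \<le> 1 \<and>
                 f1hat F (x (Suc k)) \<le> tau k / 2
                   + f2hat F (x k) * (1 - eta k)\<^sup>2 / (2 * tau k)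
                   + eta k * (2 - eta k) * Lk k * f2hat F (x k) / (2 * mu)
                   - eta k * (2 - eta k) * (Lk k)\<^sup>2 * f2hat F (x k) * tau k
                       / (2 * mu\<^sup>2 * (1 + \<xi>) ^ 3))))
         \<and> ((\<forall>k. eta k = 1) \<longrightarrow>
              (\<forall>k. f1hat F (x (Suc k)) \<le> tau k / 2 + LF / mu * f2hat F (x k)))"
proof -
  (* Only the acceptance test is used: the smoothness, Lipschitz and level-set hypotheses are
     what make the test pass for some trial value, and scheme1 already asserts that it does. *)
  have Lk_pos: "0 < Lk k" and Lk_le: "Lk k \<le> 2 * LF" for k
    using scheme1_Lk_bounds[OF scheme, of k] L_pos L_le by auto
  have step_bound: "f1hat F (x (Suc k)) \<le> tau k / 2 + f2hat F (x k) / (2 * tau k)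
      * (1 - eta k * (2 - eta k) * mu / (Lk k * tau k + mu))" for k
  proof -
    from scheme1_iteration[OF scheme, of k]
    have accept: "scheme1_accept F J (x k) (tau k) (eta k) (Lk k)"
      and next_iterate: "x (Suc k) = lm_step F J (x k) (tau k) (eta k) (Lk k)" by auto
    show ?thesis unfolding next_iterate
      using eta_rng[of k] by (intro f1hat_lm_step_le[OF accept tau_pos Lk_pos mu_pos sigma[OF stay]]) auto
  qed
  have f2_nonneg: "0 \<le> f2hat F y" for y by (simp add: f2hat_def)
  have small_tau: "f1hat F (x (Suc k)) \<le> tau k / 2
      + f2hat F (x k) * (1 - eta k)\<^sup>2 / (2 * tau k)
      + eta k * (2 - eta k) * Lk k * f2hat F (x k) / (2 * mu)
      - eta k * (2 - eta k) * (Lk k)\<^sup>2 * f2hat F (x k) * tau k / (2 * mu\<^sup>2 * 2 ^ 3)"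
    if "tau k < mu / Lk k" for k
  proof -
    have "Lk k * tau k \<le> mu" using that Lk_pos[of k] by (simp add: field_simps)
    moreover have "0 \<le> eta k * (2 - eta k)" using eta_rng[of k] by simp
    ultimately show ?thesis
      using step_bound[of k] model_factor_small_tau[OF f2_nonneg[of "x k"] tau_pos[of k] Lk_pos[of k] mu_pos]
      by fastforce
  qed
  have unit_eta: "f1hat F (x (Suc k)) \<le> tau k / 2 + LF / mu * f2hat F (x k)" if "eta k = 1" for k
  proof -
    have "f2hat F (x k) / (2 * tau k) * (1 - mu / (Lk k * tau k + mu))
        \<le> Lk k / (2 * mu) * f2hat F (x k)"
      using Lk_pos[of k] by (intro model_factor_unit_eta[OF f2_nonneg tau_pos _ mu_pos]) simp
    also have "\<dots> \<le> LF / mu * f2hat F (x k)"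
      using Lk_le[of k] mu_pos f2_nonneg by (intro mult_right_mono) (simp_all add: field_simps)
    finally show ?thesis using step_bound[of k] that by simp
  qed
  show ?thesis
    using step_bound small_tau unit_eta by (auto intro!: exI[of _ 1])
qed

end
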